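(* Let $\rho$ be a quantum state on the $L$-qubit Hilbert space $\mathcal{H}_L$ and let $\Psi,\Phi$ be two pure states on $\mathcal{H}_L\otimes\mathcal{H}_M$ ($\mathcal{H}_M$ an $M$-qubit space), both purifications of $\rho$ (i.e. $\operatorname{Tr}_{\mathcal{H}_M}\Psi=\operatorname{Tr}_{\mathcal{H}_M}\Phi=\rho$) and both of definite parity. Then there exists a unitary channel $\mathcal{U}$ on $\mathcal{H}_M$ that maps states of definite parity into states of definite parity and satisfies $(\mathcal{I}\otimes\mathcal{U})(\Psi)=\Phi$.
   Context: For $n$ qubits, the computational basis vectors $|s_1,\dots,s_n\rangle$, $s_i\in\{0,1\}$, have parity $p=\bigoplus_i s_i$; $\mathcal{H}_n=\mathcal{H}_n^0\oplus\mathcal{H}_n^1$ where $\mathcal{H}_n^p$ is spanned by basis vectors of parity $p$ (for $\mathcal{H}_L\otimes\mathcal{H}_M$, parity is computed over all $L+M$ qubits). A state $\rho$ has definite parity if $\rho=\rho_0+\rho_1$ with $\rho_p$ supported on $\mathcal{H}_n^p$; in particular a pure state has definite parity $p$ if its vector lies in $\mathcal{H}_n^p$. *)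

theory Defs
  imports "Jordan_Normal_Form.Matrix"
begin

(* Computational basis of n qubits: basis vector |s_1,...,s_n> has index
   sum_i s_i * 2^(n-i) in {0..<2^n}.  Its parity is the parity of the number
   of 1-bits. *)
definition basis_parity :: "nat \<Rightarrow> nat \<Rightarrow> bool" where
  "basis_parity n i = odd (card {k. k < n \<and> odd (i div 2 ^ k)})"

definition adj :: "complex mat \<Rightarrow> complex mat" where
  "adj A = mat (dim_col A) (dim_row A) (\<lambda>(i,j). cnj (A $$ (j,i)))"

definition hermitian :: "complex mat \<Rightarrow> bool" where
  "hermitian A \<longleftrightarrow> square_mat A \<and> adj A = A"

definition psd :: "complex mat \<Rightarrow> bool" where
  "psd A \<longleftrightarrow> hermitian A \<and>
     (\<forall>v. dim_vec v = dim_row A \<longrightarrow> 0 \<le> Re (conjugate v \<bullet> (A *\<^sub>v v)))"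

definition mtrace :: "complex mat \<Rightarrow> complex" where
  "mtrace A = (\<Sum>i<dim_row A. A $$ (i,i))"

definition qstate :: "nat \<Rightarrow> complex mat \<Rightarrow> bool" where
  "qstate n \<rho> \<longleftrightarrow> \<rho> \<in> carrier_mat (2^n) (2^n) \<and> psd \<rho> \<and> mtrace \<rho> = 1"

definition vnorm2 :: "complex vec \<Rightarrow> real" where
  "vnorm2 v = (\<Sum>i<dim_vec v. (cmod (v $ i))\<^sup>2)"

definition proj :: "complex vec \<Rightarrow> complex mat" where
  "proj v = mat (dim_vec v) (dim_vec v) (\<lambda>(i,j). v $ i * cnj (v $ j))"

definition pure_state :: "nat \<Rightarrow> complex mat \<Rightarrow> bool" where
  "pure_state n \<Psi> \<longleftrightarrow> (\<exists>v. dim_vec v = 2^n \<and> vnorm2 v = 1 \<and> \<Psi> = proj v)"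

definition supported_on_parity :: "nat \<Rightarrow> bool \<Rightarrow> complex mat \<Rightarrow> bool" where
  "supported_on_parity n p A \<longleftrightarrow> A \<in> carrier_mat (2^n) (2^n) \<and>
     (\<forall>i j. i < 2^n \<longrightarrow> j < 2^n \<longrightarrow>
        (basis_parity n i \<noteq> p \<or> basis_parity n j \<noteq> p) \<longrightarrow> A $$ (i,j) = 0)"

definition definite_parity :: "nat \<Rightarrow> complex mat \<Rightarrow> bool" where
  "definite_parity n \<rho> \<longleftrightarrow> (\<exists>\<rho>0 \<rho>1. supported_on_parity n False \<rho>0 \<and>
     supported_on_parity n True \<rho>1 \<and> \<rho> = \<rho>0 + \<rho>1)"

(* Kronecker product, consistent with the basis ordering of H_L \<otimes> H_M
   (first L qubits = more significant bits) *)
definition kron :: "complex mat \<Rightarrow> complex mat \<Rightarrow> complex mat" where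
  "kron A B = mat (dim_row A * dim_row B) (dim_col A * dim_col B)
     (\<lambda>(i,j). A $$ (i div dim_row B, j div dim_col B) * B $$ (i mod dim_row B, j mod dim_col B))"

definition ptrace_M :: "nat \<Rightarrow> nat \<Rightarrow> complex mat \<Rightarrow> complex mat" where
  "ptrace_M L M X = mat (2^L) (2^L)
     (\<lambda>(i,j). \<Sum>k<2^M. X $$ (i * 2^M + k, j * 2^M + k))"

definition unitary :: "nat \<Rightarrow> complex mat \<Rightarrow> bool" where
  "unitary n U \<longleftrightarrow> U \<in> carrier_mat (2^n) (2^n) \<and> U * adj U = 1\<^sub>m (2^n)"

definition uchan :: "complex mat \<Rightarrow> complex mat \<Rightarrow> complex mat" where
  "uchan U X = U * X * adj U"

end

theory Submission
  imports Defs "Jordan_Normal_Form.Determinant"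
begin

text \<open>Write a purification vector as \<open>v = (\<Sum>i. e\<^sub>i \<otimes> v\<^sub>i)\<close>. Equal partial traces
  say exactly that the families \<open>(v\<^sub>i)\<close> and \<open>(w\<^sub>i)\<close> of environment vectors have the same
  Gram matrix. If \<open>v\<close> has parity \<open>p\<close>, each \<open>v\<^sub>i\<close> has parity \<open>parity(i) \<noteq> p\<close>, and
  likewise for \<open>w\<close> with \<open>q\<close>. Composing Householder reflections, each acting inside one
  parity class, gives a parity-preserving unitary with \<open>U v\<^sub>i = w\<^sub>i\<close> when \<open>p = q\<close>;
  when \<open>p \<noteq> q\<close> one first flips the last environment qubit. A unitary that preserves or
  flips parity maps states of definite parity to states of definite parity.\<close>

lemma cnj_of_bool [simp]: "cnj (of_bool b) = of_bool b"
  by (cases b) simp_all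

lemma cscalar_prod_diff_right:
  fixes x y z :: "complex vec"
  shows "x \<in> carrier_vec n \<Longrightarrow> y \<in> carrier_vec n \<Longrightarrow> z \<in> carrier_vec n \<Longrightarrow>
   z \<bullet>c (x - y) = z \<bullet>c x - z \<bullet>c y"
  by (simp add: scalar_prod_def sum_subtractf algebra_simps conjugate_complex_def)

lemma cscalar_prod_diff_left:
  fixes x y z :: "complex vec"
  shows "x \<in> carrier_vec n \<Longrightarrow> y \<in> carrier_vec n \<Longrightarrow> z \<in> carrier_vec n \<Longrightarrow>
   (x - y) \<bullet>c z = x \<bullet>c z - y \<bullet>c z"
  by (simp add: scalar_prod_def sum_subtractf algebra_simps)

lemma cnj_cscalar_prod: "dim_vec x = dim_vec y \<Longrightarrow> cnj (x \<bullet>c y) = y \<bullet>c x"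
  by (simp add: scalar_prod_def mult.commute)

lemma adj_carrier [simp]: "A \<in> carrier_mat n m \<Longrightarrow> adj A \<in> carrier_mat m n"
  unfolding adj_def by simp

lemma adj_dim [simp]: "dim_row (adj A) = dim_col A" "dim_col (adj A) = dim_row A"
  unfolding adj_def by simp_all

lemma index_adj [simp]: "i < dim_col A \<Longrightarrow> j < dim_row A \<Longrightarrow> adj A $$ (i, j) = cnj (A $$ (j, i))"
  unfolding adj_def by simp

lemma adj_one [simp]: "adj (1\<^sub>m n) = 1\<^sub>m n"
  unfolding adj_def by (intro eq_matI) auto

lemma adj_mult:
  "A \<in> carrier_mat n m \<Longrightarrow> B \<in> carrier_mat m k \<Longrightarrow> adj (A * B) = adj B * adj A"
  unfolding adj_def
  by (intro eq_matI) (auto simp: scalar_prod_def sum_distrib_left mult.commute intro!: sum.cong)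

lemma unitary_mult:
  assumes "A \<in> carrier_mat n n" "B \<in> carrier_mat n n"
    and "A * adj A = 1\<^sub>m n" "B * adj B = 1\<^sub>m n"
  shows "(A * B) * adj (A * B) = 1\<^sub>m n"
proof -
  have "(A * B) * adj (A * B) = A * (B * (adj B * adj A))"
    unfolding adj_mult[OF assms(1,2)] using assms by (intro assoc_mult_mat) auto
  also have "B * (adj B * adj A) = adj A"
    using assms by (subst assoc_mult_mat[symmetric]) auto
  finally show ?thesis using assms by simp
qed

lemma unitary_adj_mult: "A \<in> carrier_mat n n \<Longrightarrow> A * adj A = 1\<^sub>m n \<Longrightarrow> adj A * A = 1\<^sub>m n"
  using mat_mult_left_right_inverse[of A n "adj A"] by simp

lemma mult_mat_vec_cscalar_prod:
  assumes A: "A \<in> carrier_mat n m" and v: "v \<in> carrier_vec m" and w: "w \<in> carrier_vec n"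
  shows "(A *\<^sub>v v) \<bullet>c w = v \<bullet>c (adj A *\<^sub>v w)"
proof -
  have "(A *\<^sub>v v) \<bullet>c w = (\<Sum>i<n. \<Sum>j<m. A $$ (i, j) * v $ j * cnj (w $ i))"
    using A v w by (simp add: scalar_prod_def lessThan_atLeast0 sum_distrib_right)
  also have "\<dots> = (\<Sum>j<m. \<Sum>i<n. A $$ (i, j) * v $ j * cnj (w $ i))"
    by (rule sum.swap)
  also have "\<dots> = v \<bullet>c (adj A *\<^sub>v w)"
    using A v w by (simp add: scalar_prod_def lessThan_atLeast0 sum_distrib_left cnj_sum algebra_simps)
  finally show ?thesis .
qed

lemma unitary_cscalar_prod:
  assumes U: "U \<in> carrier_mat n n" "U * adj U = 1\<^sub>m n"
    and v: "v \<in> carrier_vec n" and w: "w \<in> carrier_vec n"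
  shows "(U *\<^sub>v v) \<bullet>c (U *\<^sub>v w) = v \<bullet>c w"
proof -
  have "(U *\<^sub>v v) \<bullet>c (U *\<^sub>v w) = v \<bullet>c (adj U *\<^sub>v (U *\<^sub>v w))"
    using assms by (intro mult_mat_vec_cscalar_prod) auto
  also have "adj U *\<^sub>v (U *\<^sub>v w) = w"
    using assms by (subst assoc_mult_mat_vec[symmetric]) (auto simp: unitary_adj_mult)
  finally show ?thesis .
qed

section \<open>Graded unitaries and Householder reflections\<close>

text \<open>The labelling \<open>\<pi>\<close> is a \<open>\<int>/2\<close>-grading of the indices (below: the parity of a basis
  state); matrices of degree \<open>True\<close> exchange the two classes.\<close>

definition homogeneous_vec :: "(nat \<Rightarrow> bool) \<Rightarrow> bool \<Rightarrow> 'a::zero vec \<Rightarrow> bool" where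
  "homogeneous_vec \<pi> r v \<longleftrightarrow> (\<forall>l<dim_vec v. \<pi> l \<noteq> r \<longrightarrow> v $ l = 0)"

definition homogeneous_mat :: "(nat \<Rightarrow> bool) \<Rightarrow> bool \<Rightarrow> 'a::zero mat \<Rightarrow> bool" where
  "homogeneous_mat \<pi> f A \<longleftrightarrow>
     (\<forall>k<dim_row A. \<forall>l<dim_col A. \<pi> k \<noteq> (\<pi> l \<noteq> f) \<longrightarrow> A $$ (k, l) = 0)"

lemma homogeneous_mat_one: "homogeneous_mat \<pi> False (1\<^sub>m n)"
  unfolding homogeneous_mat_def by auto

lemma homogeneous_mat_adj: "homogeneous_mat \<pi> f A \<Longrightarrow> homogeneous_mat \<pi> f (adj A)"
  unfolding homogeneous_mat_def by auto

lemma homogeneous_mat_mult: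
  fixes A B :: "'a::semiring_0 mat"
  assumes A: "homogeneous_mat \<pi> f A" and B: "homogeneous_mat \<pi> g B"
    and dim: "dim_col A = dim_row B"
  shows "homogeneous_mat \<pi> (f \<noteq> g) (A * B)"
  unfolding homogeneous_mat_def
proof (intro allI impI)
  fix i j assume ij: "i < dim_row (A * B)" "j < dim_col (A * B)" "\<pi> i \<noteq> (\<pi> j \<noteq> (f \<noteq> g))"
  have "A $$ (i, k) * B $$ (k, j) = 0" if k: "k < dim_col A" for k
  proof (cases "\<pi> k = (\<pi> j \<noteq> g)")
    case True
    then have "\<pi> i \<noteq> (\<pi> k \<noteq> f)"
      using ij(3) by auto
    then show ?thesis
      using A ij k dim unfolding homogeneous_mat_def by simp
  next
    case False
    then show ?thesis
      using B ij k dim unfolding homogeneous_mat_def by simp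
  qed
  then show "(A * B) $$ (i, j) = 0"
    using ij dim by (simp add: scalar_prod_def)
qed

lemma homogeneous_mat_mult_vec:
  fixes A :: "'a::semiring_0 mat"
  assumes A: "homogeneous_mat \<pi> f A" and v: "homogeneous_vec \<pi> r v"
    and dim: "dim_col A = dim_vec v"
  shows "homogeneous_vec \<pi> (r \<noteq> f) (A *\<^sub>v v)"
  unfolding homogeneous_vec_def
proof (intro allI impI)
  fix i assume i: "i < dim_vec (A *\<^sub>v v)" "\<pi> i \<noteq> (r \<noteq> f)"
  have "A $$ (i, k) * v $ k = 0" if "k < dim_vec v" for k
    using A v i that dim unfolding homogeneous_mat_def homogeneous_vec_def by (cases "\<pi> k = r") auto
  then show "(A *\<^sub>v v) $ i = 0"
    using i dim by (simp add: scalar_prod_def)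
qed

text \<open>Since \<open>\<beta>\<close> need not be real, the reflection \<open>1 - u u\<^sup>* / \<beta>\<close> is unitary under the
  condition \<open>\<beta> + cnj \<beta> = |u|\<^sup>2\<close> rather than \<open>\<beta> = |u|\<^sup>2 / 2\<close>.\<close>

definition householder :: "nat \<Rightarrow> complex vec \<Rightarrow> complex \<Rightarrow> complex mat" where
  "householder n u \<beta> = mat n n (\<lambda>(i, j). of_bool (i = j) - u $ i * cnj (u $ j) / \<beta>)"

lemma householder_carrier: "householder n u \<beta> \<in> carrier_mat n n"
  unfolding householder_def by simp

lemma householder_unitary:
  assumes u: "u \<in> carrier_vec n" and norm: "u \<bullet>c u = \<beta> + cnj \<beta>" and nz: "\<beta> \<noteq> 0"
  shows "householder n u \<beta> * adj (householder n u \<beta>) = 1\<^sub>m n"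
proof (rule eq_matI)
  fix i j assume "i < dim_row (1\<^sub>m n)" "j < dim_col (1\<^sub>m n)"
  then have ij: "i < n" "j < n" by simp_all
  have expand: "(\<Sum>k<n. (of_bool (i = k) - p k) * (of_bool (j = k) - q k))
      = of_bool (i = j) - q i - p j + (\<Sum>k<n. p k * q k)" for p q :: "nat \<Rightarrow> complex"
    using ij by (simp add: algebra_simps sum_subtractf sum.distrib)
  have "(householder n u \<beta> * adj (householder n u \<beta>)) $$ (i, j) =
    (\<Sum>k<n. (of_bool (i = k) - u $ i * cnj (u $ k) / \<beta>) * (of_bool (j = k) - u $ k * cnj (u $ j) / cnj \<beta>))"
    using ij unfolding householder_def
    by (simp add: scalar_prod_def lessThan_atLeast0 mult.commute)
  also have "\<dots> = of_bool (i = j) - u $ i * cnj (u $ j) / cnj \<beta> - u $ i * cnj (u $ j) / \<beta>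
      + u $ i * cnj (u $ j) / (\<beta> * cnj \<beta>) * (\<Sum>k<n. u $ k * cnj (u $ k))"
    unfolding expand by (simp add: sum_distrib_left sum_divide_distrib algebra_simps)
  also have "(\<Sum>k<n. u $ k * cnj (u $ k)) = \<beta> + cnj \<beta>"
    using norm u by (simp add: scalar_prod_def lessThan_atLeast0)
  also have "of_bool (i = j) - u $ i * cnj (u $ j) / cnj \<beta> - u $ i * cnj (u $ j) / \<beta>
      + u $ i * cnj (u $ j) / (\<beta> * cnj \<beta>) * (\<beta> + cnj \<beta>) = of_bool (i = j)"
    using nz by (simp add: field_simps)
  finally show "(householder n u \<beta> * adj (householder n u \<beta>)) $$ (i, j) = 1\<^sub>m n $$ (i, j)"
    using ij by simp
qed (simp_all add: householder_def)

lemma householder_mult_vec: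
  assumes u: "u \<in> carrier_vec n" and z: "z \<in> carrier_vec n"
  shows "householder n u \<beta> *\<^sub>v z = z - ((z \<bullet>c u) / \<beta>) \<cdot>\<^sub>v u"
proof (rule eq_vecI)
  fix i assume "i < dim_vec (z - ((z \<bullet>c u) / \<beta>) \<cdot>\<^sub>v u)"
  then have i: "i < n" using u by simp
  have expand: "(\<Sum>k<n. (of_bool (i = k) - p k) * z $ k) = z $ i - (\<Sum>k<n. p k * z $ k)"
    for p :: "nat \<Rightarrow> complex"
    using i by (simp add: algebra_simps sum_subtractf)
  have "(householder n u \<beta> *\<^sub>v z) $ i = (\<Sum>k<n. (of_bool (i = k) - u $ i * cnj (u $ k) / \<beta>) * z $ k)"
    using i z unfolding householder_def by (simp add: scalar_prod_def lessThan_atLeast0)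
  also have "\<dots> = z $ i - (z \<bullet>c u) / \<beta> * u $ i"
    unfolding expand using u z
    by (simp add: scalar_prod_def lessThan_atLeast0 sum_distrib_left sum_divide_distrib algebra_simps)
  finally show "(householder n u \<beta> *\<^sub>v z) $ i = (z - ((z \<bullet>c u) / \<beta>) \<cdot>\<^sub>v u) $ i"
    using i u z by simp
qed (use u z in \<open>simp add: householder_def\<close>)

lemma householder_homogeneous:
  assumes "u \<in> carrier_vec n" "homogeneous_vec \<pi> r u"
  shows "homogeneous_mat \<pi> False (householder n u \<beta>)"
  using assms unfolding homogeneous_mat_def homogeneous_vec_def householder_def by auto

lemma exists_homogeneous_unitary_map:
  assumes x: "x \<in> carrier_vec n" and y: "y \<in> carrier_vec n" and norm: "x \<bullet>c x = y \<bullet>c y"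
    and hx: "homogeneous_vec \<pi> r x" and hy: "homogeneous_vec \<pi> r y"
  obtains V where "V \<in> carrier_mat n n" "V * adj V = 1\<^sub>m n" "homogeneous_mat \<pi> False V"
    "V *\<^sub>v x = y" "\<And>z. z \<in> carrier_vec n \<Longrightarrow> z \<bullet>c x = z \<bullet>c y \<Longrightarrow> V *\<^sub>v z = z"
proof (cases "x = y")
  case True
  show thesis
    by (rule that[of "1\<^sub>m n"]) (use True x in \<open>simp_all add: homogeneous_mat_one\<close>)
next
  case False
  define u where "u = x - y"
  define \<beta> where "\<beta> = x \<bullet>c u"
  have u: "u \<in> carrier_vec n"
    unfolding u_def using x y by simp
  have uu: "u \<bullet>c u = \<beta> + cnj \<beta>"
    unfolding u_def \<beta>_def using x y norm
    by (simp add: cscalar_prod_diff_left cscalar_prod_diff_right cnj_cscalar_prod)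
  have "\<beta> \<noteq> 0"
  proof
    assume "\<beta> = 0"
    then have u0: "u = 0\<^sub>v n"
      using uu conjugate_square_eq_0_vec[OF u] by simp
    have "x = y"
    proof (rule eq_vecI)
      show "x $ i = y $ i" if "i < dim_vec y" for i
        using that x y arg_cong[OF u0, of "\<lambda>v. v $ i"] unfolding u_def by simp
    qed (use x y in simp)
    then show False
      using False by simp
  qed
  have hu: "homogeneous_vec \<pi> r u"
    using hx hy x y unfolding u_def homogeneous_vec_def by simp
  show thesis
  proof (rule that[of "householder n u \<beta>"])
    have "householder n u \<beta> *\<^sub>v x = x - (\<beta> / \<beta>) \<cdot>\<^sub>v u"
      unfolding \<beta>_def using u x by (rule householder_mult_vec)
    also have "\<dots> = y"
      using \<open>\<beta> \<noteq> 0\<close> x y unfolding u_def by (intro eq_vecI) simp_all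
    finally show "householder n u \<beta> *\<^sub>v x = y" .
    show "householder n u \<beta> *\<^sub>v z = z" if "z \<in> carrier_vec n" "z \<bullet>c x = z \<bullet>c y" for z
      using that x y u by (intro eq_vecI) (simp_all add: householder_mult_vec u_def cscalar_prod_diff_right)
  qed (use u uu \<open>\<beta> \<noteq> 0\<close> hu in \<open>simp_all add: householder_carrier householder_unitary householder_homogeneous\<close>)
qed

lemma exists_homogeneous_unitary_of_gram_eq:
  fixes a b :: "nat \<Rightarrow> complex vec" and m :: nat
  assumes carrier: "\<And>i. i < m \<Longrightarrow> a i \<in> carrier_vec n \<and> b i \<in> carrier_vec n"
    and gram: "\<And>i j. i < m \<Longrightarrow> j < m \<Longrightarrow> a i \<bullet>c a j = b i \<bullet>c b j"
    and homogeneous: "\<And>i. i < m \<Longrightarrow> homogeneous_vec \<pi> (c i) (a i) \<and> homogeneous_vec \<pi> (c i) (b i)"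
  shows "\<exists>U. U \<in> carrier_mat n n \<and> U * adj U = 1\<^sub>m n \<and> homogeneous_mat \<pi> False U \<and>
    (\<forall>i<m. U *\<^sub>v a i = b i)"
  using assms
proof (induction m)
  case 0
  show ?case
    by (intro exI[of _ "1\<^sub>m n"]) (simp add: homogeneous_mat_one)
next
  case (Suc m)
  obtain U where U: "U \<in> carrier_mat n n" "U * adj U = 1\<^sub>m n" "homogeneous_mat \<pi> False U"
    and maps: "\<And>i. i < m \<Longrightarrow> U *\<^sub>v a i = b i"
    using Suc by force
  have am: "a m \<in> carrier_vec n" and bm: "b m \<in> carrier_vec n"
    using Suc.prems(1) by auto
  txt \<open>\<open>U a\<^sub>m\<close> has the same inner products with the \<open>b\<^sub>i\<close> as \<open>b\<^sub>m\<close>, so the reflection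
    sending it to \<open>b\<^sub>m\<close> fixes every \<open>b\<^sub>i\<close>.\<close>
  define x where "x = U *\<^sub>v a m"
  have x: "x \<in> carrier_vec n"
    unfolding x_def using U am by simp
  have "x \<bullet>c x = b m \<bullet>c b m"
    unfolding x_def using U am Suc.prems(2) by (simp add: unitary_cscalar_prod)
  moreover have "homogeneous_vec \<pi> (c m) x"
    unfolding x_def using homogeneous_mat_mult_vec[OF U(3)] Suc.prems(3) U am by fastforce
  ultimately obtain V where V: "V \<in> carrier_mat n n" "V * adj V = 1\<^sub>m n" "homogeneous_mat \<pi> False V"
    and Vx: "V *\<^sub>v x = b m"
    and V_fixes: "\<And>z. z \<in> carrier_vec n \<Longrightarrow> z \<bullet>c x = z \<bullet>c b m \<Longrightarrow> V *\<^sub>v z = z"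
    using exists_homogeneous_unitary_map[OF x bm] Suc.prems(3) by blast
  have "(V * U) *\<^sub>v a i = b i" if i: "i < Suc m" for i
  proof (cases "i = m")
    case True
    then show ?thesis
      using V U am Vx unfolding x_def by simp
  next
    case False
    then have "i < m" using i by simp
    have "b i \<bullet>c x = a i \<bullet>c a m"
      unfolding x_def maps[OF \<open>i < m\<close>, symmetric]
      using U am Suc.prems(1) \<open>i < m\<close> by (simp add: unitary_cscalar_prod)
    then have "V *\<^sub>v b i = b i"
      using V_fixes Suc.prems(1,2) \<open>i < m\<close> by simp
    then show ?thesis
      using V U maps[OF \<open>i < m\<close>] Suc.prems(1) \<open>i < m\<close> by simp
  qed
  moreover have "(V * U) * adj (V * U) = 1\<^sub>m n"
    using unitary_mult V U by blast
  moreover have "homogeneous_mat \<pi> False (V * U)"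
    using homogeneous_mat_mult[OF V(3) U(3)] V U by simp
  ultimately show ?case
    using V U by (intro exI[of _ "V * U"]) simp
qed

lemma exists_homogeneous_unitary_of_gram_eq_degree:
  fixes a b :: "nat \<Rightarrow> complex vec" and m :: nat
  assumes X: "X \<in> carrier_mat n n" "X * adj X = 1\<^sub>m n" "homogeneous_mat \<pi> f X"
    and carrier: "\<And>i. i < m \<Longrightarrow> a i \<in> carrier_vec n \<and> b i \<in> carrier_vec n"
    and gram: "\<And>i j. i < m \<Longrightarrow> j < m \<Longrightarrow> a i \<bullet>c a j = b i \<bullet>c b j"
    and homogeneous: "\<And>i. i < m \<Longrightarrow> homogeneous_vec \<pi> (c i) (a i) \<and> homogeneous_vec \<pi> (c i \<noteq> f) (b i)"
  shows "\<exists>U. U \<in> carrier_mat n n \<and> U * adj U = 1\<^sub>m n \<and> homogeneous_mat \<pi> f U \<and>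
    (\<forall>i<m. U *\<^sub>v a i = b i)"
proof -
  have "\<exists>U. U \<in> carrier_mat n n \<and> U * adj U = 1\<^sub>m n \<and> homogeneous_mat \<pi> False U \<and>
    (\<forall>i<m. U *\<^sub>v (X *\<^sub>v a i) = b i)"
  proof (rule exists_homogeneous_unitary_of_gram_eq[where c = "\<lambda>i. c i \<noteq> f"])
    show "(X *\<^sub>v a i) \<bullet>c (X *\<^sub>v a j) = b i \<bullet>c b j" if "i < m" "j < m" for i j
      using X carrier gram that by (simp add: unitary_cscalar_prod)
    show "homogeneous_vec \<pi> (c i \<noteq> f) (X *\<^sub>v a i) \<and> homogeneous_vec \<pi> (c i \<noteq> f) (b i)" if "i < m" for i
      using homogeneous_mat_mult_vec[OF X(3), of "c i" "a i"] X carrier[OF that] homogeneous[OF that]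
      by auto
  qed (use X carrier in simp)
  then obtain U where U: "U \<in> carrier_mat n n" "U * adj U = 1\<^sub>m n" "homogeneous_mat \<pi> False U"
    and maps: "\<forall>i<m. U *\<^sub>v (X *\<^sub>v a i) = b i"
    by blast
  show ?thesis
  proof (intro exI[of _ "U * X"] conjI allI impI)
    show "U * X * adj (U * X) = 1\<^sub>m n"
      using unitary_mult U X by blast
    show "homogeneous_mat \<pi> f (U * X)"
      using homogeneous_mat_mult[OF U(3) X(3)] U X by simp
    show "U * X *\<^sub>v a i = b i" if "i < m" for i
      using maps U X carrier that by simp
  qed (use U X in simp)
qed

section \<open>Parity of qubit basis states\<close>

lemma odd_div_power_block_low:
  fixes i l :: nat
  assumes "k < M" "l < 2 ^ M"
  shows "odd ((i * 2 ^ M + l) div 2 ^ k) = odd (l div 2 ^ k)"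
proof -
  have "(2::nat) ^ M = 2 ^ (M - k) * 2 ^ k"
    using assms by (simp add: power_add[symmetric])
  then have "(i * 2 ^ M + l) div 2 ^ k = l div 2 ^ k + i * 2 ^ (M - k)"
    by (simp add: mult.assoc[symmetric] add.commute)
  moreover have "even (i * 2 ^ (M - k))"
    using assms by simp
  ultimately show ?thesis by simp
qed

lemma block_div_power_high:
  fixes i l :: nat
  assumes "l < 2 ^ M"
  shows "(i * 2 ^ M + l) div 2 ^ (M + j) = i div 2 ^ j"
  using assms by (simp add: power_add div_mult2_eq)

lemma basis_parity_block:
  fixes i l :: nat
  assumes l: "l < 2 ^ M"
  shows "basis_parity (L + M) (i * 2 ^ M + l) = (basis_parity L i \<noteq> basis_parity M l)"
proof -
  let ?low = "{k. k < M \<and> odd (l div 2 ^ k)}"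
  let ?high = "{k. k < L \<and> odd (i div 2 ^ k)}"
  have "{k. k < L + M \<and> odd ((i * 2 ^ M + l) div 2 ^ k)} = ?low \<union> (\<lambda>j. M + j) ` ?high"
  proof (intro Set.set_eqI iffI)
    fix k assume k: "k \<in> {k. k < L + M \<and> odd ((i * 2 ^ M + l) div 2 ^ k)}"
    show "k \<in> ?low \<union> (\<lambda>j. M + j) ` ?high"
    proof (cases "k < M")
      case True
      then show ?thesis
        using k odd_div_power_block_low[OF True l, of i] by auto
    next
      case False
      then obtain j where "k = M + j"
        using le_Suc_ex not_less by blast
      then show ?thesis
        using k block_div_power_high[OF l, of i j] by auto
    qed
  qed (use odd_div_power_block_low[OF _ l, of _ i] block_div_power_high[OF l, of i] in auto)
  moreover have "card (?low \<union> (\<lambda>j. M + j) ` ?high) = card ?low + card ?high"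
    by (subst card_Un_disjoint) (auto simp: card_image)
  ultimately show ?thesis
    unfolding basis_parity_def by auto
qed

definition flip_bit0 :: "nat \<Rightarrow> nat" where
  "flip_bit0 l = (if even l then l + 1 else l - 1)"

lemma flip_bit0_flip_bit0 [simp]: "flip_bit0 (flip_bit0 l) = l"
  unfolding flip_bit0_def by auto

lemma flip_bit0_less:
  assumes "0 < M" "l < 2 ^ M"
  shows "flip_bit0 l < 2 ^ M"
proof (cases "even l")
  case True
  have "even ((2::nat) ^ M)"
    using assms(1) by simp
  then have "l + 1 \<noteq> 2 ^ M"
    using True by (metis even_add odd_one)
  then show ?thesis
    using True assms(2) unfolding flip_bit0_def by simp
qed (use assms(2) in \<open>simp add: flip_bit0_def\<close>)

lemma flip_bit0_div_power:
  assumes "0 < k"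
  shows "flip_bit0 l div 2 ^ k = l div 2 ^ k"
proof -
  have "flip_bit0 l div 2 = l div 2"
    unfolding flip_bit0_def by (auto elim: oddE)
  moreover obtain j where "k = Suc j"
    using assms gr0_conv_Suc by blast
  ultimately show ?thesis
    by (simp add: div_mult2_eq)
qed

lemma basis_parity_flip_bit0:
  assumes "0 < M"
  shows "basis_parity M (flip_bit0 l) = (\<not> basis_parity M l)"
proof -
  let ?high = "\<lambda>x::nat. {k. 0 < k \<and> k < M \<and> odd (x div 2 ^ k)}"
  have split: "{k. k < M \<and> odd (x div 2 ^ k)} = ?high x \<union> (if odd x then {0} else {})" for x :: nat
  proof (intro Set.set_eqI)
    show "k \<in> {k. k < M \<and> odd (x div 2 ^ k)} \<longleftrightarrow> k \<in> ?high x \<union> (if odd x then {0} else {})" for k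
      using assms by (cases "k = 0") auto
  qed
  have card: "card {k. k < M \<and> odd (x div 2 ^ k)} = card (?high x) + of_bool (odd x)" for x :: nat
    unfolding split by (subst card_Un_disjoint) auto
  have "?high (flip_bit0 l) = ?high l"
    using flip_bit0_div_power by auto
  moreover have "odd (flip_bit0 l) = even l"
    unfolding flip_bit0_def by auto
  ultimately show ?thesis
    unfolding basis_parity_def card by auto
qed

text \<open>The Pauli \<open>X\<close> gate on the last qubit.\<close>

definition flip_mat :: "nat \<Rightarrow> complex mat" where
  "flip_mat M = mat (2 ^ M) (2 ^ M) (\<lambda>(k, l). of_bool (k = flip_bit0 l))"

lemma flip_mat_carrier: "flip_mat M \<in> carrier_mat (2 ^ M) (2 ^ M)"
  unfolding flip_mat_def by simp

lemma flip_mat_unitary: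
  assumes "0 < M"
  shows "flip_mat M * adj (flip_mat M) = 1\<^sub>m (2 ^ M)"
proof (rule eq_matI)
  fix k k' assume "k < dim_row (1\<^sub>m (2 ^ M))" "k' < dim_col (1\<^sub>m (2 ^ M))"
  then have kk: "k < 2 ^ M" "k' < 2 ^ M" by simp_all
  have flip_eq: "(k = flip_bit0 l) = (flip_bit0 k = l)" for k l
    by auto
  have "(flip_mat M * adj (flip_mat M)) $$ (k, k') =
      (\<Sum>l<2 ^ M. of_bool (flip_bit0 k = l) * of_bool (flip_bit0 k' = l))"
    using kk unfolding flip_mat_def flip_eq by (simp add: scalar_prod_def lessThan_atLeast0)
  also have "\<dots> = of_bool (k = k')"
    using flip_bit0_less[OF assms kk(1)] by simp (metis flip_bit0_flip_bit0)
  finally show "(flip_mat M * adj (flip_mat M)) $$ (k, k') = 1\<^sub>m (2 ^ M) $$ (k, k')"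
    using kk by simp
qed (simp_all add: flip_mat_def)

lemma flip_mat_homogeneous:
  assumes "0 < M"
  shows "homogeneous_mat (basis_parity M) True (flip_mat M)"
  using basis_parity_flip_bit0[OF assms] unfolding homogeneous_mat_def flip_mat_def by auto

section \<open>Purifications of definite parity\<close>

lemma definite_parity_iff:
  "definite_parity n \<sigma> \<longleftrightarrow>
     \<sigma> \<in> carrier_mat (2 ^ n) (2 ^ n) \<and> homogeneous_mat (basis_parity n) False \<sigma>"
proof
  assume "definite_parity n \<sigma>"
  then show "\<sigma> \<in> carrier_mat (2 ^ n) (2 ^ n) \<and> homogeneous_mat (basis_parity n) False \<sigma>"
    unfolding definite_parity_def supported_on_parity_def homogeneous_mat_def by auto
next
  assume \<sigma>: "\<sigma> \<in> carrier_mat (2 ^ n) (2 ^ n) \<and> homogeneous_mat (basis_parity n) False \<sigma>"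
  define part where "part p = mat (2 ^ n) (2 ^ n)
    (\<lambda>(i, j). if basis_parity n i = p \<and> basis_parity n j = p then \<sigma> $$ (i, j) else 0)" for p
  have "supported_on_parity n p (part p)" for p
    unfolding supported_on_parity_def part_def by auto
  moreover have "\<sigma> = part False + part True"
    using \<sigma> unfolding part_def homogeneous_mat_def by (intro eq_matI) auto
  ultimately show "definite_parity n \<sigma>"
    unfolding definite_parity_def by blast
qed

lemma definite_parity_uchan:
  assumes U: "U \<in> carrier_mat (2 ^ n) (2 ^ n)" "homogeneous_mat (basis_parity n) f U"
    and \<sigma>: "definite_parity n \<sigma>"
  shows "definite_parity n (uchan U \<sigma>)"
proof -
  have \<sigma>': "\<sigma> \<in> carrier_mat (2 ^ n) (2 ^ n)" "homogeneous_mat (basis_parity n) False \<sigma>"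
    using \<sigma> unfolding definite_parity_iff by auto
  have "homogeneous_mat (basis_parity n) f (U * \<sigma>)"
    using homogeneous_mat_mult[OF U(2) \<sigma>'(2)] U \<sigma>' by simp
  then have "homogeneous_mat (basis_parity n) False (U * \<sigma> * adj U)"
    using homogeneous_mat_mult[OF _ homogeneous_mat_adj[OF U(2)]] U \<sigma>' by fastforce
  moreover have "U * \<sigma> * adj U \<in> carrier_mat (2 ^ n) (2 ^ n)"
    using U \<sigma>' by (metis adj_carrier mult_carrier_mat)
  ultimately show ?thesis
    unfolding definite_parity_iff uchan_def by simp
qed

lemma definite_parity_proj:
  assumes v: "dim_vec v = 2 ^ n" and parity: "definite_parity n (proj v)"
  obtains p where "homogeneous_vec (basis_parity n) p v"
proof (cases "\<exists>i<2 ^ n. v $ i \<noteq> 0")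
  case True
  then obtain i0 where i0: "i0 < 2 ^ n" "v $ i0 \<noteq> 0" by blast
  have "v $ i = 0" if "i < 2 ^ n" "basis_parity n i \<noteq> basis_parity n i0" for i
  proof -
    have "proj v $$ (i, i0) = 0"
      using parity that i0 unfolding definite_parity_iff homogeneous_mat_def by auto
    then show ?thesis
      using that i0 v unfolding proj_def by simp
  qed
  then show thesis
    using that[of "basis_parity n i0"] v unfolding homogeneous_vec_def by auto
next
  case False
  then show thesis
    using that[of False] v unfolding homogeneous_vec_def by auto
qed

lemma uchan_proj:
  assumes K: "K \<in> carrier_mat n n" and v: "v \<in> carrier_vec n"
  shows "uchan K (proj v) = proj (K *\<^sub>v v)"
proof (rule eq_matI)
  fix i j assume "i < dim_row (proj (K *\<^sub>v v))" "j < dim_col (proj (K *\<^sub>v v))"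
  then have ij: "i < n" "j < n"
    using K unfolding proj_def by auto
  have "uchan K (proj v) $$ (i, j) = (\<Sum>s<n. (\<Sum>r<n. K $$ (i, r) * (v $ r * cnj (v $ s))) * cnj (K $$ (j, s)))"
    using ij K v unfolding uchan_def proj_def by (simp add: scalar_prod_def lessThan_atLeast0)
  also have "\<dots> = (\<Sum>r<n. K $$ (i, r) * v $ r) * cnj (\<Sum>s<n. K $$ (j, s) * v $ s)"
    by (simp add: sum_distrib_left sum_distrib_right algebra_simps)
  also have "\<dots> = proj (K *\<^sub>v v) $$ (i, j)"
    using ij K v unfolding proj_def by (simp add: scalar_prod_def lessThan_atLeast0)
  finally show "uchan K (proj v) $$ (i, j) = proj (K *\<^sub>v v) $$ (i, j)" .
qed (use K v in \<open>simp_all add: uchan_def proj_def\<close>)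

text \<open>With the index convention of \<^const>\<open>kron\<close>, a vector of length \<open>Q * P\<close> is
  \<open>(\<Sum>i<Q. e\<^sub>i \<otimes> block_vec P v i)\<close>.\<close>

definition block_vec :: "nat \<Rightarrow> 'a vec \<Rightarrow> nat \<Rightarrow> 'a vec" where
  "block_vec P v i = vec P (\<lambda>l. v $ (i * P + l))"

lemma block_index_less:
  fixes i l P Q :: nat
  assumes "i < Q" "l < P"
  shows "i * P + l < Q * P"
proof -
  have "i * P + l < (i + 1) * P"
    using assms by simp
  also have "\<dots> \<le> Q * P"
    using assms by (intro mult_le_mono1) simp
  finally show ?thesis .
qed

lemma sum_lessThan_mult_blocks:
  fixes g :: "nat \<Rightarrow> 'a::comm_monoid_add"
  shows "(\<Sum>s<Q * P. g s) = (\<Sum>m<Q. \<Sum>l<P. g (m * P + l))"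
proof -
  have "sum g {m * P..<m * P + P} = (\<Sum>l<P. g (m * P + l))" for m
    using sum.shift_bounds_nat_ivl[of g 0 "m * P" P] by (simp add: lessThan_atLeast0 add.commute)
  then show ?thesis
    using sum.nat_group[of g P Q] by simp
qed

lemma block_vec_eqI:
  fixes v w :: "'a vec"
  assumes "v \<in> carrier_vec (Q * P)" "w \<in> carrier_vec (Q * P)"
    and "\<And>i. i < Q \<Longrightarrow> block_vec P v i = block_vec P w i"
  shows "v = w"
proof (rule eq_vecI)
  fix r assume "r < dim_vec w"
  then have r: "r < Q * P"
    using assms by simp
  then have "0 < P"
    by (cases P) simp_all
  then have "r div P < Q" "r mod P < P"
    using r by (simp_all add: less_mult_imp_div_less)
  then have "block_vec P v (r div P) $ (r mod P) = block_vec P w (r div P) $ (r mod P)"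
    using assms(3) by simp
  then show "v $ r = w $ r"
    using \<open>r mod P < P\<close> unfolding block_vec_def by simp
qed (use assms in simp)

lemma block_vec_kron_one_mult_vec:
  assumes U: "U \<in> carrier_mat P P" and v: "v \<in> carrier_vec (Q * P)" and i: "i < Q"
  shows "block_vec P (kron (1\<^sub>m Q) U *\<^sub>v v) i = U *\<^sub>v block_vec P v i"
proof (rule eq_vecI)
  fix k assume "k < dim_vec (U *\<^sub>v block_vec P v i)"
  then have k: "k < P"
    using U by simp
  have entry: "kron (1\<^sub>m Q) U $$ (i * P + k, m * P + l) = of_bool (i = m) * U $$ (k, l)"
    if "m < Q" "l < P" for m l
    using that i k U block_index_less[OF i k] block_index_less[OF that] unfolding kron_def by auto
  have "block_vec P (kron (1\<^sub>m Q) U *\<^sub>v v) i $ k =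
      (\<Sum>s<Q * P. kron (1\<^sub>m Q) U $$ (i * P + k, s) * v $ s)"
    using U v k block_index_less[OF i k] unfolding block_vec_def kron_def
    by (simp add: scalar_prod_def lessThan_atLeast0)
  also have "\<dots> = (\<Sum>m<Q. of_bool (i = m) * (\<Sum>l<P. U $$ (k, l) * v $ (m * P + l)))"
    unfolding sum_lessThan_mult_blocks sum_distrib_left by (intro sum.cong refl) (simp add: entry)
  also have "\<dots> = (U *\<^sub>v block_vec P v i) $ k"
    using U k i unfolding block_vec_def by (simp add: scalar_prod_def lessThan_atLeast0)
  finally show "block_vec P (kron (1\<^sub>m Q) U *\<^sub>v v) i $ k = (U *\<^sub>v block_vec P v i) $ k" .
qed (use U in \<open>simp add: block_vec_def\<close>)

lemma kron_one_mult_vec_eqI: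
  assumes U: "U \<in> carrier_mat P P" and v: "v \<in> carrier_vec (Q * P)" and w: "w \<in> carrier_vec (Q * P)"
    and blocks: "\<And>i. i < Q \<Longrightarrow> U *\<^sub>v block_vec P v i = block_vec P w i"
  shows "kron (1\<^sub>m Q) U *\<^sub>v v = w"
proof (rule block_vec_eqI)
  show "kron (1\<^sub>m Q) U *\<^sub>v v \<in> carrier_vec (Q * P)"
    using U by (intro carrier_vecI) (simp add: kron_def)
  show "block_vec P (kron (1\<^sub>m Q) U *\<^sub>v v) i = block_vec P w i" if "i < Q" for i
    using block_vec_kron_one_mult_vec[OF U v that] blocks[OF that] by simp
qed (rule w)

lemma ptrace_M_proj:
  assumes v: "dim_vec v = 2 ^ L * 2 ^ M" and ij: "i < 2 ^ L" "j < 2 ^ L"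
  shows "ptrace_M L M (proj v) $$ (i, j) = block_vec (2 ^ M) v i \<bullet>c block_vec (2 ^ M) v j"
  using v ij block_index_less[OF ij(1)] block_index_less[OF ij(2)]
  unfolding ptrace_M_def proj_def block_vec_def by (simp add: scalar_prod_def lessThan_atLeast0)

lemma homogeneous_vec_block:
  assumes v: "dim_vec v = 2 ^ L * 2 ^ M" and hv: "homogeneous_vec (basis_parity (L + M)) p v"
    and i: "i < 2 ^ L"
  shows "homogeneous_vec (basis_parity M) (basis_parity L i \<noteq> p) (block_vec (2 ^ M) v i)"
  using hv v block_index_less[OF i] basis_parity_block[of _ M L i]
  unfolding homogeneous_vec_def block_vec_def by auto

lemma homogeneous_parity_eq:
  fixes v w :: "complex vec"
  assumes v: "v \<in> carrier_vec (2 ^ n)" and w: "w \<in> carrier_vec (2 ^ n)"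
    and hv: "homogeneous_vec (basis_parity n) p v" and hw: "homogeneous_vec (basis_parity n) q w"
    and nz: "v \<noteq> 0\<^sub>v (2 ^ n)"
    and moduli: "\<And>i. i < 2 ^ n \<Longrightarrow> v $ i * cnj (v $ i) = w $ i * cnj (w $ i)"
  shows "p = q"
proof -
  obtain i where i: "i < 2 ^ n" "v $ i \<noteq> 0"
    using nz v by (metis carrier_vecD eq_vecI index_zero_vec)
  then have "w $ i \<noteq> 0"
    using moduli[OF i(1)] by auto
  then show ?thesis
    using i hv hw v w unfolding homogeneous_vec_def by auto
qed

lemma exists_parity_unitary_of_blocks:
  fixes v w :: "complex vec"
  assumes v: "v \<in> carrier_vec (2 ^ L * 2 ^ M)" and w: "w \<in> carrier_vec (2 ^ L * 2 ^ M)"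
    and hv: "homogeneous_vec (basis_parity (L + M)) p v"
    and hw: "homogeneous_vec (basis_parity (L + M)) q w"
    and nz: "v \<noteq> 0\<^sub>v (2 ^ L * 2 ^ M)"
    and gram: "\<And>i j. i < 2 ^ L \<Longrightarrow> j < 2 ^ L \<Longrightarrow>
      block_vec (2 ^ M) v i \<bullet>c block_vec (2 ^ M) v j = block_vec (2 ^ M) w i \<bullet>c block_vec (2 ^ M) w j"
  obtains U where "U \<in> carrier_mat (2 ^ M) (2 ^ M)" "U * adj U = 1\<^sub>m (2 ^ M)"
    "homogeneous_mat (basis_parity M) (p \<noteq> q) U"
    "\<And>i. i < 2 ^ L \<Longrightarrow> U *\<^sub>v block_vec (2 ^ M) v i = block_vec (2 ^ M) w i"
proof -
  txt \<open>A parity-flipping unitary on the environment needs a qubit; with none, the two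
    vectors have equal moduli entrywise and hence the same parity.\<close>
  have "0 < M" if "p \<noteq> q"
  proof (rule ccontr)
    assume "\<not> 0 < M"
    then have "M = 0" by simp
    have "p = q"
    proof (rule homogeneous_parity_eq[where n = L])
      show "v $ i * cnj (v $ i) = w $ i * cnj (w $ i)" if "i < 2 ^ L" for i
        using gram[OF that that] \<open>M = 0\<close> by (simp add: block_vec_def scalar_prod_def)
    qed (use v w hv hw nz \<open>M = 0\<close> in simp_all)
    then show False
      using that by simp
  qed
  then obtain X where X: "X \<in> carrier_mat (2 ^ M) (2 ^ M)" "X * adj X = 1\<^sub>m (2 ^ M)"
    "homogeneous_mat (basis_parity M) (p \<noteq> q) X"
  proof (cases "p = q")
    case True
    then show thesis
      using that[of "1\<^sub>m (2 ^ M)"] by (simp add: homogeneous_mat_one)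
  next
    case False
    then show thesis
      using that[of "flip_mat M"] \<open>p \<noteq> q \<Longrightarrow> 0 < M\<close>
      by (simp add: flip_mat_carrier flip_mat_unitary flip_mat_homogeneous)
  qed
  have "\<exists>U. U \<in> carrier_mat (2 ^ M) (2 ^ M) \<and> U * adj U = 1\<^sub>m (2 ^ M) \<and>
      homogeneous_mat (basis_parity M) (p \<noteq> q) U \<and>
      (\<forall>i<2 ^ L. U *\<^sub>v block_vec (2 ^ M) v i = block_vec (2 ^ M) w i)"
  proof (rule exists_homogeneous_unitary_of_gram_eq_degree[OF X, where c = "\<lambda>i. basis_parity L i \<noteq> p"])
    fix i :: nat assume i: "i < 2 ^ L"
    show "block_vec (2 ^ M) v i \<in> carrier_vec (2 ^ M) \<and> block_vec (2 ^ M) w i \<in> carrier_vec (2 ^ M)"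
      unfolding block_vec_def by simp
    show "homogeneous_vec (basis_parity M) (basis_parity L i \<noteq> p) (block_vec (2 ^ M) v i) \<and>
      homogeneous_vec (basis_parity M) ((basis_parity L i \<noteq> p) \<noteq> (p \<noteq> q)) (block_vec (2 ^ M) w i)"
      using homogeneous_vec_block[OF _ hv i] homogeneous_vec_block[OF _ hw i] v w
      by (cases p; cases q) auto
  qed (rule gram)
  then show thesis
    using that by blast
qed

theorem lemma2:
  fixes L M :: nat and \<rho> \<Psi> \<Phi> :: "complex mat"
  assumes "qstate L \<rho>"
    and "pure_state (L + M) \<Psi>" and "pure_state (L + M) \<Phi>"
    and "ptrace_M L M \<Psi> = \<rho>" and "ptrace_M L M \<Phi> = \<rho>"
    and "definite_parity (L + M) \<Psi>" and "definite_parity (L + M) \<Phi>"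
  shows "\<exists>U. unitary M U \<and>
           (\<forall>\<sigma>. qstate M \<sigma> \<and> definite_parity M \<sigma> \<longrightarrow> definite_parity M (uchan U \<sigma>)) \<and>
           uchan (kron (1\<^sub>m (2^L)) U) \<Psi> = \<Phi>"
proof -
  obtain v where v: "v \<in> carrier_vec (2 ^ L * 2 ^ M)" "vnorm2 v = 1" "\<Psi> = proj v"
    using assms(2) unfolding pure_state_def power_add by (blast intro: carrier_vecI)
  obtain w where w: "w \<in> carrier_vec (2 ^ L * 2 ^ M)" "\<Phi> = proj w"
    using assms(3) unfolding pure_state_def power_add by (blast intro: carrier_vecI)
  obtain p where p: "homogeneous_vec (basis_parity (L + M)) p v"
    using definite_parity_proj[of v "L + M"] v assms(6) by (auto simp: power_add)
  obtain q where q: "homogeneous_vec (basis_parity (L + M)) q w"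
    using definite_parity_proj[of w "L + M"] w assms(7) by (auto simp: power_add)
  have "v \<noteq> 0\<^sub>v (2 ^ L * 2 ^ M)"
    using v(2) unfolding vnorm2_def by auto
  moreover have "block_vec (2 ^ M) v i \<bullet>c block_vec (2 ^ M) v j = block_vec (2 ^ M) w i \<bullet>c block_vec (2 ^ M) w j"
    if "i < 2 ^ L" "j < 2 ^ L" for i j
    using ptrace_M_proj[of v L M i j] ptrace_M_proj[of w L M i j] assms(4,5) v w that by simp
  ultimately obtain U where U: "U \<in> carrier_mat (2 ^ M) (2 ^ M)" "U * adj U = 1\<^sub>m (2 ^ M)"
    "homogeneous_mat (basis_parity M) (p \<noteq> q) U"
    "\<And>i. i < 2 ^ L \<Longrightarrow> U *\<^sub>v block_vec (2 ^ M) v i = block_vec (2 ^ M) w i"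
    using exists_parity_unitary_of_blocks[OF v(1) w(1) p q] by blast
  have K: "kron (1\<^sub>m (2 ^ L)) U \<in> carrier_mat (2 ^ L * 2 ^ M) (2 ^ L * 2 ^ M)"
    using U unfolding kron_def by simp
  have "uchan (kron (1\<^sub>m (2 ^ L)) U) \<Psi> = \<Phi>"
    using uchan_proj[OF K v(1)] kron_one_mult_vec_eqI[OF U(1) v(1) w(1) U(4)] v(3) w(2) by simp
  then show ?thesis
    using U definite_parity_uchan[OF U(1,3)] unfolding unitary_def by blast
qed

end
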